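(* Let $F:\mathbb{R}^n\rightrightarrows\mathbb{R}^p$ be a nearly convex set-valued mapping and $\Omega\subset\mathbb{R}^n$ a nearly convex set with $\operatorname{ri}(\operatorname{dom} F)\cap\operatorname{ri}\Omega\neq\emptyset$. Then the restriction $F_\Omega$ is nearly convex and $$\operatorname{ri}(\operatorname{gph} F_\Omega)=\{(x,y)\in\mathbb{R}^n\times\mathbb{R}^p: x\in\operatorname{ri}(\operatorname{dom} F)\cap\operatorname{ri}\Omega,\ y\in\operatorname{ri} F(x)\}.$$
   Context: A set $\Omega\subset\mathbb{R}^k$ is nearly convex if there is a convex set $C$ with $C\subset\Omega\subset\overline{C}$. For an arbitrary set $\Omega$, $\operatorname{ri}\Omega=\{a\in\Omega:\exists\delta>0,\ B(a;\delta)\cap\operatorname{aff}\Omega\subset\Omega\}$. For $F:\mathbb{R}^n\rightrightarrows\mathbb{R}^p$: $\operatorname{dom} F=\{x:F(x)\neq\emptyset\}$, $\operatorname{gph} F=\{(x,y):y\in F(x)\}$; $F$ is nearly convex if $\operatorname{gph} F$ is nearly convex. The restriction of $F$ to $\Omega$ is $F_\Omega(x)=F(x)$ if $x\in\Omega$ and $F_\Omega(x)=\emptyset$ otherwise. *)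

theory Defs
  imports "HOL-Analysis.Analysis"
begin

definition nearly_convex :: "'a::real_normed_vector set \<Rightarrow> bool" where
  "nearly_convex \<Omega> \<longleftrightarrow> (\<exists>C. convex C \<and> C \<subseteq> \<Omega> \<and> \<Omega> \<subseteq> closure C)"

definition ri :: "'a::real_normed_vector set \<Rightarrow> 'a set" where
  "ri \<Omega> = {a \<in> \<Omega>. \<exists>\<delta>>0. ball a \<delta> \<inter> affine hull \<Omega> \<subseteq> \<Omega>}"

definition sv_dom :: "('a \<Rightarrow> 'b set) \<Rightarrow> 'a set" where
  "sv_dom F = {x. F x \<noteq> {}}"

definition gph :: "('a \<Rightarrow> 'b set) \<Rightarrow> ('a \<times> 'b) set" where
  "gph F = {(x, y). y \<in> F x}"

definition nearly_convex_map :: "('a::real_normed_vector \<Rightarrow> 'b::real_normed_vector set) \<Rightarrow> bool" where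
  "nearly_convex_map F \<longleftrightarrow> nearly_convex (gph F)"

definition restrict_map_to :: "('a \<Rightarrow> 'b set) \<Rightarrow> 'a set \<Rightarrow> 'a \<Rightarrow> 'b set" where
  "restrict_map_to F \<Omega> x = (if x \<in> \<Omega> then F x else {})"

end

theory Submission
  imports Defs
begin

text \<open>
  A nearly convex set S lies between a convex set C and closure C, and all three share their
  affine hull and relative interior. So relative interiors of nearly convex sets obey the calculus
  of convex sets for linear images, products and (when the relative interiors meet) intersections.
  For convex C in a product, rel_interior C is fibrewise over rel_interior (fst ` C)
  (Rockafellar, Thm. 6.8), and over such points the fibres of gph F are sandwiched between the
  fibres of C and of closure C; this gives ri (gph F). The graph of the restriction of F to \<Omega> is
  gph F \<inter> (\<Omega> \<times> UNIV), whose relative interior is the intersection of the two relative interiors.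
\<close>

lemma ri_eq_rel_interior: "ri S = rel_interior S"
  unfolding ri_def rel_interior_ball by auto

lemma rel_interior_eq_of_sandwich:
  fixes C S :: "'a::euclidean_space set"
  assumes "convex C" "C \<subseteq> S" "S \<subseteq> closure C"
  shows "rel_interior S = rel_interior C"
proof -
  have hull: "affine hull S = affine hull C"
    by (metis assms(2,3) closure_same_affine_hull hull_mono subset_antisym)
  have "rel_interior C \<subseteq> rel_interior S"
    using rel_interior_mono[OF assms(2)] hull by simp
  moreover have "rel_interior S \<subseteq> rel_interior (closure C)"
    using rel_interior_mono[OF assms(3)] hull by simp
  ultimately show ?thesis
    using convex_rel_interior_closure[OF assms(1)] by auto
qed

lemma nearly_convexE:
  fixes S :: "'a::euclidean_space set"
  assumes "nearly_convex S"
  obtains C where "convex C" "C \<subseteq> S" "S \<subseteq> closure C" "ri S = rel_interior C"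
  using assms rel_interior_eq_of_sandwich
  unfolding nearly_convex_def ri_eq_rel_interior by metis

lemma nearly_convex_linear_image:
  fixes f :: "'a::euclidean_space \<Rightarrow> 'b::euclidean_space"
  assumes "linear f" "nearly_convex S"
  shows "nearly_convex (f ` S) \<and> ri (f ` S) = f ` ri S"
proof -
  obtain C where C: "convex C" "C \<subseteq> S" "S \<subseteq> closure C" "ri S = rel_interior C"
    using assms(2) by (rule nearly_convexE)
  have convex: "convex (f ` C)"
    using assms(1) C(1) by (rule convex_linear_image)
  have "f ` S \<subseteq> f ` closure C"
    using C(3) by blast
  also have "\<dots> \<subseteq> closure (f ` C)"
    using assms(1) linear_conv_bounded_linear
    by (intro continuous_image_closure_subset[where A = UNIV] linear_continuous_on) auto
  finally have "f ` S \<subseteq> closure (f ` C)" .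
  moreover have "f ` C \<subseteq> f ` S"
    using C(2) by blast
  ultimately have "nearly_convex (f ` S)" "ri (f ` S) = rel_interior (f ` C)"
    using convex rel_interior_eq_of_sandwich unfolding nearly_convex_def ri_eq_rel_interior
    by blast+
  then show ?thesis
    using rel_interior_convex_linear_image[OF assms(1) C(1)] C(4) by simp
qed

lemma nearly_convex_Times:
  fixes A :: "'a::euclidean_space set" and B :: "'b::euclidean_space set"
  assumes "nearly_convex A" "nearly_convex B"
  shows "nearly_convex (A \<times> B) \<and> ri (A \<times> B) = ri A \<times> ri B"
proof -
  obtain C where C: "convex C" "C \<subseteq> A" "A \<subseteq> closure C" "ri A = rel_interior C"
    using assms(1) by (rule nearly_convexE)
  obtain D where D: "convex D" "D \<subseteq> B" "B \<subseteq> closure D" "ri B = rel_interior D"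
    using assms(2) by (rule nearly_convexE)
  have "convex (C \<times> D)" "C \<times> D \<subseteq> A \<times> B" "A \<times> B \<subseteq> closure (C \<times> D)"
    using C D by (auto simp: convex_Times closure_Times)
  then show ?thesis
    using rel_interior_eq_of_sandwich rel_interior_Times[OF C(1) D(1)] C(4) D(4)
    unfolding nearly_convex_def ri_eq_rel_interior by metis
qed

lemma nearly_convex_Int:
  fixes A B :: "'a::euclidean_space set"
  assumes "nearly_convex A" "nearly_convex B" "ri A \<inter> ri B \<noteq> {}"
  shows "nearly_convex (A \<inter> B) \<and> ri (A \<inter> B) = ri A \<inter> ri B"
proof -
  obtain C where C: "convex C" "C \<subseteq> A" "A \<subseteq> closure C" "ri A = rel_interior C"
    using assms(1) by (rule nearly_convexE)
  obtain D where D: "convex D" "D \<subseteq> B" "B \<subseteq> closure D" "ri B = rel_interior D"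
    using assms(2) by (rule nearly_convexE)
  have meet: "rel_interior C \<inter> rel_interior D \<noteq> {}"
    using assms(3) C(4) D(4) by simp
  have "convex (C \<inter> D)" "C \<inter> D \<subseteq> A \<inter> B" "A \<inter> B \<subseteq> closure (C \<inter> D)"
    using C D closure_Int_convex[OF C(1) D(1) meet] by (auto simp: convex_Int)
  then show ?thesis
    using rel_interior_eq_of_sandwich convex_rel_interior_inter_two[OF C(1) D(1) meet] C(4) D(4)
    unfolding nearly_convex_def ri_eq_rel_interior by metis
qed

lemma convex_fiber:
  fixes C :: "('a::real_vector \<times> 'b::real_vector) set"
  assumes "convex C"
  shows "convex {y. (x, y) \<in> C}"
proof -
  have "{y. (x, y) \<in> C} = snd ` (C \<inter> ({x} \<times> UNIV))"
    by force
  then show ?thesis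
    using assms by (simp add: convex_Int convex_Times convex_linear_image linear_snd)
qed

lemma rel_interior_fiber:
  fixes C :: "('a::euclidean_space \<times> 'b::euclidean_space) set"
  assumes "convex C" "x \<in> rel_interior (fst ` C)"
  shows "rel_interior {y. (x, y) \<in> C} = {y. (x, y) \<in> rel_interior C}"
proof -
  have "{x. {y. (x, y) \<in> C} \<noteq> {}} = fst ` C"
    by force
  then show ?thesis
    using rel_interior_projection[OF assms(1) refl] assms(2) by auto
qed

lemma closure_fiber:
  fixes C :: "('a::euclidean_space \<times> 'b::euclidean_space) set"
  assumes "convex C" "x \<in> rel_interior (fst ` C)"
  shows "closure {y. (x, y) \<in> C} = {y. (x, y) \<in> closure C}"
proof -
  have affine: "affine ({x} \<times> (UNIV :: 'b set))"
    unfolding affine_def by (auto, metis scaleR_left_distrib scaleR_one)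
  have "fst ` rel_interior C = rel_interior (fst ` C)"
    using assms(1) by (rule rel_interior_convex_linear_image[OF linear_fst])
  then have "rel_interior C \<inter> ({x} \<times> UNIV) \<noteq> {}"
    using assms(2) by force
  then have "closure (C \<inter> ({x} \<times> UNIV)) = closure C \<inter> ({x} \<times> UNIV)"
    using convex_affine_closure_Int[OF assms(1) affine] by simp
  moreover have "C \<inter> ({x} \<times> UNIV) = {x} \<times> {y. (x, y) \<in> C}"
    by auto
  ultimately show ?thesis
    by (auto simp: closure_Times)
qed

lemma nearly_convex_ri_fiber:
  fixes S :: "('a::euclidean_space \<times> 'b::euclidean_space) set"
  assumes "nearly_convex S" "x \<in> ri (fst ` S)"
  shows "ri {y. (x, y) \<in> S} = {y. (x, y) \<in> ri S}"
proof -
  obtain C where C: "convex C" "C \<subseteq> S" "S \<subseteq> closure C" "ri S = rel_interior C"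
    using assms(1) by (rule nearly_convexE)
  have "ri (fst ` S) = fst ` rel_interior C"
    using nearly_convex_linear_image[OF linear_fst assms(1)] C(4) by simp
  then have x: "x \<in> rel_interior (fst ` C)"
    using assms(2) rel_interior_convex_linear_image[OF linear_fst C(1)] by simp
  have "{y. (x, y) \<in> C} \<subseteq> {y. (x, y) \<in> S}" "{y. (x, y) \<in> S} \<subseteq> {y. (x, y) \<in> closure C}"
    using C(2,3) by auto
  then have "ri {y. (x, y) \<in> S} = rel_interior {y. (x, y) \<in> C}"
    using rel_interior_eq_of_sandwich[OF convex_fiber[OF C(1)]] closure_fiber[OF C(1) x]
    unfolding ri_eq_rel_interior by simp
  then show ?thesis
    using rel_interior_fiber[OF C(1) x] C(4) by simp
qed

lemma sv_dom_eq_fst_gph: "sv_dom F = fst ` gph F"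
  unfolding sv_dom_def gph_def by force

lemma fst_ri_gph:
  fixes F :: "'a::euclidean_space \<Rightarrow> 'b::euclidean_space set"
  assumes "nearly_convex_map F"
  shows "fst ` ri (gph F) = ri (sv_dom F)"
  using nearly_convex_linear_image[OF linear_fst] assms
  unfolding nearly_convex_map_def sv_dom_eq_fst_gph by metis

lemma ri_gph:
  fixes F :: "'a::euclidean_space \<Rightarrow> 'b::euclidean_space set"
  assumes "nearly_convex_map F"
  shows "ri (gph F) = {(x, y). x \<in> ri (sv_dom F) \<and> y \<in> ri (F x)}"
proof -
  have ri_F: "ri (F x) = {y. (x, y) \<in> ri (gph F)}" if "x \<in> ri (sv_dom F)" for x
  proof -
    have "F x = {y. (x, y) \<in> gph F}"
      unfolding gph_def by simp
    then show ?thesis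
      using nearly_convex_ri_fiber[of "gph F" x] assms that
      unfolding nearly_convex_map_def sv_dom_eq_fst_gph by simp
  qed
  have "x \<in> ri (sv_dom F)" if "(x, y) \<in> ri (gph F)" for x y
    using that fst_ri_gph[OF assms] by (metis fst_conv image_eqI)
  then show ?thesis
    using ri_F by auto
qed

lemma gph_restrict_map_to: "gph (restrict_map_to F \<Omega>) = gph F \<inter> (\<Omega> \<times> UNIV)"
  unfolding gph_def restrict_map_to_def by (auto split: if_splits)

theorem theorem3p5:
  fixes F :: "real^'n \<Rightarrow> (real^'p) set" and \<Omega> :: "(real^'n) set"
  assumes "nearly_convex_map F"
    and "nearly_convex \<Omega>"
    and "ri (sv_dom F) \<inter> ri \<Omega> \<noteq> {}"
  shows "nearly_convex_map (restrict_map_to F \<Omega>)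
    \<and> ri (gph (restrict_map_to F \<Omega>)) =
        {(x, y). x \<in> ri (sv_dom F) \<inter> ri \<Omega> \<and> y \<in> ri (F x)}"
proof -
  have UNIV: "nearly_convex (UNIV :: (real^'p) set)" "ri (UNIV :: (real^'p) set) = UNIV"
    unfolding nearly_convex_def ri_eq_rel_interior by auto
  have cylinder: "nearly_convex (\<Omega> \<times> (UNIV :: (real^'p) set))"
    "ri (\<Omega> \<times> (UNIV :: (real^'p) set)) = ri \<Omega> \<times> UNIV"
    using nearly_convex_Times[OF assms(2) UNIV(1)] UNIV(2) by auto
  have gph_F: "nearly_convex (gph F)"
    using assms(1) unfolding nearly_convex_map_def .
  obtain x0 where x0: "x0 \<in> ri (sv_dom F)" "x0 \<in> ri \<Omega>"
    using assms(3) by blast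
  then obtain y0 where "(x0, y0) \<in> ri (gph F)"
    using fst_ri_gph[OF assms(1)] by force
  then have "ri (gph F) \<inter> ri (\<Omega> \<times> UNIV) \<noteq> {}"
    using x0(2) cylinder(2) by blast
  then have "nearly_convex (gph F \<inter> (\<Omega> \<times> UNIV))"
    and "ri (gph F \<inter> (\<Omega> \<times> UNIV)) = ri (gph F) \<inter> (ri \<Omega> \<times> UNIV)"
    using nearly_convex_Int[OF gph_F cylinder(1)] cylinder(2) by auto
  moreover have "ri (gph F) \<inter> (ri \<Omega> \<times> UNIV) =
      {(x, y). x \<in> ri (sv_dom F) \<inter> ri \<Omega> \<and> y \<in> ri (F x)}"
    unfolding ri_gph[OF assms(1)] by blast
  ultimately show ?thesis
    unfolding nearly_convex_map_def gph_restrict_map_to by argo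
qed

end
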